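(* There is no binary self-orthogonal $[94,7,46]$ code.
   Context: A binary linear code $C$ is self-orthogonal if $C\subseteq C^\perp$. *)

theory Defs
  imports Main "HOL-Library.Z2"
begin

definition bin_vectors :: "nat \<Rightarrow> (nat \<Rightarrow> bit) set" where
  "bin_vectors n = {v. \<forall>i\<ge>n. v i = 0}"

definition bin_linear_code :: "nat \<Rightarrow> (nat \<Rightarrow> bit) set \<Rightarrow> bool" where
  "bin_linear_code n C \<longleftrightarrow> C \<subseteq> bin_vectors n \<and> (\<lambda>i. 0) \<in> C
     \<and> (\<forall>x\<in>C. \<forall>y\<in>C. (\<lambda>i. x i + y i) \<in> C)
     \<and> (\<forall>c::bit. \<forall>x\<in>C. (\<lambda>i. c * x i) \<in> C)"

definition lin_comb :: "(nat \<Rightarrow> bit) set \<Rightarrow> ((nat \<Rightarrow> bit) \<Rightarrow> bit) \<Rightarrow> nat \<Rightarrow> bit" where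
  "lin_comb B a = (\<lambda>i. \<Sum>b\<in>B. a b * b i)"

definition code_dim :: "(nat \<Rightarrow> bit) set \<Rightarrow> nat \<Rightarrow> bool" where
  "code_dim C k \<longleftrightarrow> (\<exists>B. finite B \<and> B \<subseteq> C \<and> card B = k
     \<and> (\<forall>a. lin_comb B a = (\<lambda>i. 0) \<longrightarrow> (\<forall>b\<in>B. a b = 0))
     \<and> C = {lin_comb B a | a. True})"

definition hamming_dist :: "nat \<Rightarrow> (nat \<Rightarrow> bit) \<Rightarrow> (nat \<Rightarrow> bit) \<Rightarrow> nat" where
  "hamming_dist n x y = card {i. i < n \<and> x i \<noteq> y i}"

definition min_dist :: "nat \<Rightarrow> (nat \<Rightarrow> bit) set \<Rightarrow> nat" where
  "min_dist n C = Min {hamming_dist n x y | x y. x \<in> C \<and> y \<in> C \<and> x \<noteq> y}"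

definition self_orthogonal :: "nat \<Rightarrow> (nat \<Rightarrow> bit) set \<Rightarrow> bool" where
  "self_orthogonal n C \<longleftrightarrow> (\<forall>x\<in>C. \<forall>y\<in>C. (\<Sum>i<n. x i * y i) = 0)"

end

theory Submission
  imports Defs "HOL-Library.FuncSet"
begin

text \<open>
  Since C is self-orthogonal, every codeword has even weight and, because
  \<open>wt (x + y) = wt x + wt y - 2 |supp x \<inter> supp y|\<close> with an even intersection,
  weights add modulo 4. Hence the codewords of weight divisible by 4 form a
  subcode D, of index 2 as C contains a word of weight 46. D is a code with 64
  words whose nonzero weights are at least 48. In a binary additive code every
  coordinate is 1 in at most half of the words, so the total weight of D is at
  most \<open>94 \<cdot> 32 = 3008\<close>, while its 63 nonzero words already weigh at least
  \<open>63 \<cdot> 48 = 3024\<close>.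
\<close>

lemma bit_add_self: "(a::bit) + a = 0"
  by simp

lemma bit_add_eq_0_iff: "(a::bit) + b = 0 \<longleftrightarrow> a = b"
  by (cases a; cases b) simp_all

lemma add_add_cancel_right: "(\<lambda>i. x i + y i + y i) = (x :: nat \<Rightarrow> bit)"
  by (simp only: add.assoc bit_add_self add_0_right)

lemma UNIV_bit: "(UNIV :: bit set) = {0, 1}"
  by (auto elim: bit.exhaust)

lemma card_UNIV_bit: "card (UNIV :: bit set) = 2"
  unfolding UNIV_bit by simp

lemma of_nat_bit_eq_0_iff: "(of_nat m :: bit) = 0 \<longleftrightarrow> even m"
  by (induction m) auto

lemma sum_bit_eq_of_nat_card:
  assumes "finite A"
  shows "(\<Sum>i\<in>A. x i :: bit) = of_nat (card {i\<in>A. x i = 1})"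
  using assms
proof (induction A rule: finite_induct)
  case (insert a A)
  have "{i\<in>insert a A. x i = 1} = (if x a = 1 then insert a {i\<in>A. x i = 1} else {i\<in>A. x i = 1})"
    by auto
  with insert show ?case by auto
qed simp

lemma even_card_common_support:
  fixes x y :: "nat \<Rightarrow> bit"
  assumes "(\<Sum>i<n. x i * y i) = (0::bit)"
  shows "even (card {i. i < n \<and> x i = 1 \<and> y i = 1})"
proof -
  have "(\<Sum>i<n. x i * y i) = of_nat (card {i\<in>{..<n}. x i * y i = 1})"
    by (rule sum_bit_eq_of_nat_card) simp
  also have "{i\<in>{..<n}. x i * y i = 1} = {i. i < n \<and> x i = 1 \<and> y i = 1}"
    by (auto elim: bit.exhaust)
  finally show ?thesis
    unfolding of_nat_bit_eq_0_iff[symmetric] using assms by argo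
qed

definition weight :: "nat \<Rightarrow> (nat \<Rightarrow> bit) \<Rightarrow> nat" where
  "weight n x = card {i. i < n \<and> x i = 1}"

lemma weight_zero [simp]: "weight n (\<lambda>i. 0) = 0"
  by (simp add: weight_def)

lemma hamming_dist_eq_weight: "hamming_dist n x y = weight n (\<lambda>i. x i + y i)"
proof -
  have "x i \<noteq> y i \<longleftrightarrow> x i + y i = 1" for i
    by (cases "x i"; cases "y i") simp_all
  then show ?thesis
    by (simp add: hamming_dist_def weight_def)
qed

lemma weight_add:
  "weight n (\<lambda>i. x i + y i) + 2 * card {i. i < n \<and> x i = 1 \<and> y i = 1} = weight n x + weight n y"
proof -
  let ?X = "{i. i < n \<and> x i = 1}" and ?Y = "{i. i < n \<and> y i = 1}"
  have common: "{i. i < n \<and> x i = 1 \<and> y i = 1} = ?X \<inter> ?Y"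
    by auto
  have sum: "{i. i < n \<and> x i + y i = 1} = (?X \<union> ?Y) - (?X \<inter> ?Y)"
    by (auto elim: bit.exhaust)
  have "card ?X + card ?Y = card (?X \<union> ?Y) + card (?X \<inter> ?Y)"
    by (rule card_Un_Int) auto
  moreover have "card ((?X \<union> ?Y) - (?X \<inter> ?Y)) = card (?X \<union> ?Y) - card (?X \<inter> ?Y)"
    by (rule card_Diff_subset) auto
  moreover have "card (?X \<inter> ?Y) \<le> card (?X \<union> ?Y)"
    by (rule card_mono) auto
  ultimately show ?thesis
    unfolding weight_def common sum by linarith
qed

lemma card_code_dim:
  assumes "code_dim C k"
  shows "card C = 2 ^ k"
proof -
  from assms obtain B where "finite B" and card_B: "card B = k"
    and indep: "\<forall>a. lin_comb B a = (\<lambda>i. 0) \<longrightarrow> (\<forall>b\<in>B. a b = 0)"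
    and span: "C = {lin_comb B a | a. True}"
    unfolding code_dim_def by blast
  let ?P = "B \<rightarrow>\<^sub>E (UNIV :: bit set)"
  have "lin_comb B a = lin_comb B (restrict a B)" for a
    unfolding lin_comb_def by (intro ext sum.cong) simp_all
  then have image: "C = lin_comb B ` ?P"
    unfolding span by force
  have "inj_on (lin_comb B) ?P"
  proof
    fix a a' assume a: "a \<in> ?P" and a': "a' \<in> ?P" and eq: "lin_comb B a = lin_comb B a'"
    have "lin_comb B (\<lambda>b. a b + a' b) = (\<lambda>i. lin_comb B a i + lin_comb B a' i)"
      unfolding lin_comb_def by (simp only: distrib_right sum.distrib)
    also have "\<dots> = (\<lambda>i. 0)"
      unfolding eq by simp
    finally have "\<forall>b\<in>B. a b + a' b = 0"
      using indep by blast
    then have "\<forall>b\<in>B. a b = a' b"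
      by (simp only: bit_add_eq_0_iff)
    with a a' show "a = a'"
      by (blast intro: PiE_ext)
  qed
  then have "card C = card ?P"
    unfolding image by (rule card_image)
  also have "\<dots> = 2 ^ k"
    using \<open>finite B\<close> card_B by (simp add: card_PiE card_UNIV_bit)
  finally show ?thesis .
qed

lemma bin_linear_code_zero: "bin_linear_code n C \<Longrightarrow> (\<lambda>i. 0) \<in> C"
  by (simp add: bin_linear_code_def)

lemma bin_linear_code_add:
  "bin_linear_code n C \<Longrightarrow> x \<in> C \<Longrightarrow> y \<in> C \<Longrightarrow> (\<lambda>i. x i + y i) \<in> C"
  by (simp add: bin_linear_code_def)

lemma finite_code_distances:
  "finite C \<Longrightarrow> finite {hamming_dist n x y | x y. x \<in> C \<and> y \<in> C \<and> x \<noteq> y}"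
  by (rule finite_subset[of _ "(\<lambda>(x, y). hamming_dist n x y) ` (C \<times> C)"]) auto

lemma min_dist_le_weight:
  assumes "bin_linear_code n C" and "finite C" and "x \<in> C" and "x \<noteq> (\<lambda>i. 0)"
  shows "min_dist n C \<le> weight n x"
proof -
  have "hamming_dist n x (\<lambda>i. 0) \<in> {hamming_dist n x y | x y. x \<in> C \<and> y \<in> C \<and> x \<noteq> y}"
    using assms bin_linear_code_zero by blast
  then have "min_dist n C \<le> hamming_dist n x (\<lambda>i. 0)"
    unfolding min_dist_def by (rule Min_le[OF finite_code_distances[OF \<open>finite C\<close>]])
  then show ?thesis
    by (simp add: hamming_dist_def weight_def)
qed

lemma min_dist_attained:
  assumes "bin_linear_code n C" and "finite C" and "2 \<le> card C"
  obtains x where "x \<in> C" and "weight n x = min_dist n C"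
proof -
  let ?S = "{hamming_dist n x y | x y. x \<in> C \<and> y \<in> C \<and> x \<noteq> y}"
  have "\<not> card C \<le> Suc 0"
    using assms(3) by simp
  then have "?S \<noteq> {}"
    using card_le_Suc0_iff_eq[OF \<open>finite C\<close>] by blast
  then have "Min ?S \<in> ?S"
    using Min_in[OF finite_code_distances[OF \<open>finite C\<close>]] by blast
  then obtain x y where x: "x \<in> C" and y: "y \<in> C"
    and "min_dist n C = weight n (\<lambda>i. x i + y i)"
    unfolding min_dist_def hamming_dist_eq_weight by blast
  then show ?thesis
    by (intro that[OF bin_linear_code_add[OF assms(1) x y]]) (rule sym)
qed

lemma self_orthogonal_weight_even:
  assumes "self_orthogonal n C" and "x \<in> C"
  shows "even (weight n x)"
proof -
  have "even (card {i. i < n \<and> x i = 1 \<and> x i = 1})"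
    using assms unfolding self_orthogonal_def by (blast intro: even_card_common_support)
  then show ?thesis
    by (simp add: weight_def)
qed

lemma self_orthogonal_weight_add_mod_4:
  assumes "self_orthogonal n C" and "x \<in> C" and "y \<in> C"
  shows "weight n (\<lambda>i. x i + y i) mod 4 = (weight n x + weight n y) mod 4"
proof -
  have "even (card {i. i < n \<and> x i = 1 \<and> y i = 1})"
    using assms unfolding self_orthogonal_def by (blast intro: even_card_common_support)
  then obtain k where "card {i. i < n \<and> x i = 1 \<and> y i = 1} = 2 * k"
    by blast
  with weight_add[of n x y] have "weight n x + weight n y = weight n (\<lambda>i. x i + y i) + 4 * k"
    by simp
  then show ?thesis
    by simp
qed

lemma self_orthogonal_doubly_even_add_iff:
  assumes "self_orthogonal n C" and "x \<in> C" and "y \<in> C" and "\<not> 4 dvd weight n y"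
  shows "4 dvd weight n (\<lambda>i. x i + y i) \<longleftrightarrow> \<not> 4 dvd weight n x"
proof -
  have "even (weight n x)" and "even (weight n y)"
    using assms self_orthogonal_weight_even by blast+
  moreover have "weight n (\<lambda>i. x i + y i) mod 4 = (weight n x + weight n y) mod 4"
    using assms(1-3) by (rule self_orthogonal_weight_add_mod_4)
  moreover have "\<And>a b c :: nat. even a \<Longrightarrow> even b \<Longrightarrow> \<not> 4 dvd b
      \<Longrightarrow> c mod 4 = (a + b) mod 4 \<Longrightarrow> 4 dvd c \<longleftrightarrow> \<not> 4 dvd a"
    by presburger
  ultimately show ?thesis
    using assms(4) by blast
qed

definition doubly_even_subcode :: "nat \<Rightarrow> (nat \<Rightarrow> bit) set \<Rightarrow> (nat \<Rightarrow> bit) set" where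
  "doubly_even_subcode n C = {x \<in> C. 4 dvd weight n x}"

lemma doubly_even_subcode_add:
  assumes "bin_linear_code n C" and "self_orthogonal n C"
    and "x \<in> doubly_even_subcode n C" and "y \<in> doubly_even_subcode n C"
  shows "(\<lambda>i. x i + y i) \<in> doubly_even_subcode n C"
proof -
  have x: "x \<in> C" "4 dvd weight n x" and y: "y \<in> C" "4 dvd weight n y"
    using assms(3,4) by (simp_all add: doubly_even_subcode_def)
  have "weight n (\<lambda>i. x i + y i) mod 4 = (weight n x + weight n y) mod 4"
    using assms(2) x(1) y(1) by (rule self_orthogonal_weight_add_mod_4)
  moreover have "4 dvd weight n x + weight n y"
    using x(2) y(2) by (rule dvd_add)
  ultimately have "4 dvd weight n (\<lambda>i. x i + y i)"
    by (simp only: dvd_eq_mod_eq_0)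
  with bin_linear_code_add[OF assms(1) x(1) y(1)] show ?thesis
    unfolding doubly_even_subcode_def by blast
qed

lemma card_doubly_even_subcode:
  assumes "bin_linear_code n C" and "self_orthogonal n C" and "finite C"
    and "y \<in> C" and "\<not> 4 dvd weight n y"
  shows "card C = 2 * card (doubly_even_subcode n C)"
proof -
  let ?D = "doubly_even_subcode n C" and ?t = "\<lambda>x i. x i + y i"
  have D_sub: "?D \<subseteq> C"
    by (auto simp: doubly_even_subcode_def)
  have "bij_betw ?t ?D (C - ?D)"
  proof (rule bij_betw_byWitness[where f' = ?t])
    show "\<forall>x\<in>?D. ?t (?t x) = x" and "\<forall>x\<in>C - ?D. ?t (?t x) = x"
      by (auto simp only: add_add_cancel_right)
    show "?t ` ?D \<subseteq> C - ?D" and "?t ` (C - ?D) \<subseteq> ?D"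
      using assms bin_linear_code_add[OF assms(1)] self_orthogonal_doubly_even_add_iff[OF assms(2)]
      by (auto simp: doubly_even_subcode_def)
  qed
  then have "card (C - ?D) = card ?D"
    by (simp add: bij_betw_same_card)
  moreover have "card (C - ?D) = card C - card ?D"
    using D_sub \<open>finite C\<close> by (intro card_Diff_subset) (auto intro: finite_subset)
  moreover have "card ?D \<le> card C"
    using D_sub \<open>finite C\<close> by (rule card_mono[rotated])
  ultimately show ?thesis
    by linarith
qed

lemma card_coordinate_one_le:
  fixes D :: "(nat \<Rightarrow> bit) set"
  assumes "finite D" and D_add: "\<And>x y. x \<in> D \<Longrightarrow> y \<in> D \<Longrightarrow> (\<lambda>i. x i + y i) \<in> D"
  shows "2 * card {x \<in> D. x i = 1} \<le> card D"
proof (cases "\<exists>y\<in>D. y i = 1")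
  case True
  then obtain y where "y \<in> D" and "y i = 1"
    by blast
  let ?ones = "{x \<in> D. x i = 1}" and ?zeros = "{x \<in> D. x i = 0}"
  have "inj_on (\<lambda>x j. x j + y j) ?ones"
    by (rule inj_on_inverseI[where g = "\<lambda>x j. x j + y j"]) (simp only: add_add_cancel_right)
  moreover have "(\<lambda>x j. x j + y j) ` ?ones \<subseteq> ?zeros"
    using D_add \<open>y \<in> D\<close> \<open>y i = 1\<close> by auto
  ultimately have "card ?ones \<le> card ?zeros"
    using \<open>finite D\<close> by (simp add: card_inj_on_le)
  moreover have "card D = card ?ones + card ?zeros"
    using \<open>finite D\<close> by (subst card_Un_disjoint[symmetric]) (auto intro: arg_cong[where f = card])
  ultimately show ?thesis
    by linarith
next
  case False
  then have no_ones: "{x \<in> D. x i = 1} = {}"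
    by blast
  show ?thesis
    unfolding no_ones by simp
qed

lemma sum_weight_eq_sum_card_coordinate_one:
  assumes "finite D"
  shows "(\<Sum>x\<in>D. weight n x) = (\<Sum>i<n. card {x \<in> D. x i = 1})"
proof -
  have "(\<Sum>x\<in>D. weight n x) = (\<Sum>x\<in>D. \<Sum>i\<in>{i \<in> {..<n}. x i = 1}. 1)"
    by (simp add: weight_def)
  also have "\<dots> = (\<Sum>i<n. \<Sum>x\<in>{x \<in> D. x i = 1}. 1)"
    using assms by (rule sum.swap_restrict) simp
  finally show ?thesis
    by simp
qed

lemma sum_weight_le:
  fixes D :: "(nat \<Rightarrow> bit) set"
  assumes "finite D" and "\<And>x y. x \<in> D \<Longrightarrow> y \<in> D \<Longrightarrow> (\<lambda>i. x i + y i) \<in> D"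
  shows "2 * (\<Sum>x\<in>D. weight n x) \<le> n * card D"
proof -
  have "2 * (\<Sum>x\<in>D. weight n x) = (\<Sum>i<n. 2 * card {x \<in> D. x i = 1})"
    using assms(1) by (simp add: sum_weight_eq_sum_card_coordinate_one sum_distrib_left)
  also have "\<dots> \<le> (\<Sum>i<n. card D)"
    using assms by (intro sum_mono card_coordinate_one_le)
  finally show ?thesis
    by simp
qed

lemma plotkin_bound:
  fixes D :: "(nat \<Rightarrow> bit) set"
  assumes "finite D" and "(\<lambda>i. 0) \<in> D"
    and "\<And>x y. x \<in> D \<Longrightarrow> y \<in> D \<Longrightarrow> (\<lambda>i. x i + y i) \<in> D"
    and "\<And>x. x \<in> D \<Longrightarrow> x \<noteq> (\<lambda>i. 0) \<Longrightarrow> d \<le> weight n x"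
  shows "2 * ((card D - 1) * d) \<le> n * card D"
proof -
  have "(card D - 1) * d = (\<Sum>x\<in>D - {\<lambda>i. 0}. d)"
    using assms(1,2) by simp
  also have "\<dots> \<le> (\<Sum>x\<in>D - {\<lambda>i. 0}. weight n x)"
    using assms(4) by (intro sum_mono) blast
  also have "\<dots> \<le> (\<Sum>x\<in>D. weight n x)"
    using assms(1) by (intro sum_mono2) auto
  finally have "(card D - 1) * d \<le> (\<Sum>x\<in>D. weight n x)" .
  moreover have "2 * (\<Sum>x\<in>D. weight n x) \<le> n * card D"
    using assms(1,3) by (rule sum_weight_le)
  ultimately show ?thesis
    by linarith
qed

lemma plotkin_bound_doubly_even_subcode:
  assumes "bin_linear_code n C" and "self_orthogonal n C" and "finite C"
    and "\<And>x. x \<in> doubly_even_subcode n C \<Longrightarrow> x \<noteq> (\<lambda>i. 0) \<Longrightarrow> d \<le> weight n x"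
  shows "2 * ((card (doubly_even_subcode n C) - 1) * d) \<le> n * card (doubly_even_subcode n C)"
proof (rule plotkin_bound)
  show "finite (doubly_even_subcode n C)"
    using \<open>finite C\<close> by (simp add: doubly_even_subcode_def)
  show "(\<lambda>i. 0) \<in> doubly_even_subcode n C"
    using bin_linear_code_zero[OF assms(1)] by (simp add: doubly_even_subcode_def)
qed (use assms doubly_even_subcode_add in blast)+

theorem proposition6p9:
  shows "\<not> (\<exists>C. bin_linear_code 94 C \<and> code_dim C 7 \<and> min_dist 94 C = 46
                \<and> self_orthogonal 94 C)"
proof
  assume "\<exists>C. bin_linear_code 94 C \<and> code_dim C 7 \<and> min_dist 94 C = 46
                \<and> self_orthogonal 94 C"
  then obtain C where lin: "bin_linear_code 94 C" and "code_dim C 7"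
    and dist: "min_dist 94 C = 46" and so: "self_orthogonal 94 C"
    by blast
  then have card_C: "card C = 128"
    by (simp add: card_code_dim)
  then have "finite C"
    by (simp add: card_ge_0_finite)
  obtain y where "y \<in> C" and "weight 94 y = 46"
    using min_dist_attained[OF lin \<open>finite C\<close>] card_C dist by auto
  let ?D = "doubly_even_subcode 94 C"
  have "card ?D = 64"
    using card_doubly_even_subcode[OF lin so \<open>finite C\<close> \<open>y \<in> C\<close>] \<open>weight 94 y = 46\<close> card_C
    by simp
  have "48 \<le> weight 94 x" if "x \<in> ?D" and "x \<noteq> (\<lambda>i. 0)" for x
  proof -
    have "46 \<le> weight 94 x" and "4 dvd weight 94 x"
      using min_dist_le_weight[OF lin \<open>finite C\<close>] dist that
      by (auto simp: doubly_even_subcode_def)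
    then show ?thesis
      by presburger
  qed
  then have "2 * ((card ?D - 1) * 48) \<le> 94 * card ?D"
    by (rule plotkin_bound_doubly_even_subcode[OF lin so \<open>finite C\<close>])
  with \<open>card ?D = 64\<close> show False
    by simp
qed

end
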